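(* For all integers $n,k,i\ge 0$, \[ e_{n,i}^k = \sum_{j=0}^{i} (-1)^j \binom{n+1}{j} (k+i+1-j)^n . \]
   Context: Convention: $0^0=1$. For a fixed integer parameter $k$, the numbers $e^k_{n,i}$ are defined by $e^k_{0,0}=1$, $e^k_{n,i}=0$ whenever $i<0$ or $i>n$, and $e^k_{n,i}=(k+i+1)\,e^k_{n-1,i}+(n-k-i)\,e^k_{n-1,i-1}$ for all other integers $n,i$. *)

theory Defs
  imports Main
begin

fun euler_e :: "int \<Rightarrow> nat \<Rightarrow> int \<Rightarrow> int" where
  "euler_e k 0 i = (if i = 0 then 1 else 0)"
| "euler_e k (Suc m) i =
     (if i < 0 \<or> i > int (Suc m) then 0
      else (k + i + 1) * euler_e k m i + (int (Suc m) - k - i) * euler_e k m (i - 1))"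

end

theory Submission
  imports Defs
begin

(* Write S n i x for the sum over j <= i of (-1)^j C(n+1,j) (x-j)^n. Pascal's rule and the
   absorption identity (j+1) C(n+1,j+1) = (n+1-j) C(n+1,j) give, term by term,
     S (n+1) (i+1) x = x S n (i+1) x + (n+2-x) S n i (x-1),
   which for x = k+i+2 is the recurrence of e^k_{n+1,i+1}. The recurrence of e holds for
   every i (both sides vanish outside 0..n+1), so induction on n yields e^k_{n,i} = S n i (k+i+1)
   for all i >= 0, with no separate argument for the range i > n where both sides are 0. *)

lemma euler_e_eq_0: "i < 0 \<or> i > int n \<Longrightarrow> euler_e k n i = 0"
  by (induction n arbitrary: i) auto

lemma euler_e_Suc_eq:
  "euler_e k (Suc m) i = (k + i + 1) * euler_e k m i + (int (Suc m) - k - i) * euler_e k m (i - 1)"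
  using euler_e_eq_0[of i m k] euler_e_eq_0[of "i - 1" m k] by auto

lemma of_nat_Suc_times_binomial_Suc:
  "of_nat (Suc i) * of_nat (Suc n choose Suc i) =
     (of_nat n + 1 - of_nat i) * (of_nat (Suc n choose i) :: 'a :: comm_ring_1)"
proof (cases "i \<le> Suc n")
  case True
  have "Suc i * (Suc n choose Suc i) = (Suc n - i) * (Suc n choose i)"
    using Suc_times_binomial[of i n] binomial_absorb_comp[of "Suc n" i] by simp
  then have "of_nat (Suc i) * of_nat (Suc n choose Suc i) = of_nat (Suc n - i) * (of_nat (Suc n choose i) :: 'a)"
    by (metis of_nat_mult)
  moreover have "of_nat (Suc n - i) = (of_nat n + 1 - of_nat i :: 'a)"
    using True by simp
  ultimately show ?thesis by simp
next
  case False
  then show ?thesis by (simp add: binomial_eq_0)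
qed

definition alt_power_sum :: "nat \<Rightarrow> nat \<Rightarrow> 'a :: comm_ring_1 \<Rightarrow> 'a" where
  "alt_power_sum n i x = (\<Sum>j\<le>i. (-1) ^ j * of_nat (Suc n choose j) * (x - of_nat j) ^ n)"

lemma alt_power_sum_0_left: "alt_power_sum 0 i x = (if i = 0 then 1 else 0)"
proof (cases i)
  case (Suc i')
  have "(\<Sum>j\<le>i'. (-1) ^ Suc j * of_nat (1 choose Suc j) * (x - of_nat (Suc j)) ^ 0) =
      (\<Sum>j\<le>i'. if j = 0 then - 1 else (0 :: 'a))"
    by (rule sum.cong) (auto simp: binomial_eq_0)
  then show ?thesis
    unfolding alt_power_sum_def Suc sum.atMost_Suc_shift by simp
qed (simp add: alt_power_sum_def)

lemma alt_power_sum_0_right: "alt_power_sum n 0 x = x ^ n"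
  by (simp add: alt_power_sum_def)

lemma alt_power_sum_Suc_Suc:
  "alt_power_sum (Suc n) (Suc i) x =
     x * alt_power_sum n (Suc i) x + (of_nat n + 2 - x) * alt_power_sum n i (x - 1)"
proof -
  have term_Suc: "(-1) ^ Suc j * of_nat (Suc (Suc n) choose Suc j) * (x - of_nat (Suc j)) ^ Suc n =
      x * ((-1) ^ Suc j * of_nat (Suc n choose Suc j) * (x - of_nat (Suc j)) ^ n)
      + (of_nat n + 2 - x) * ((-1) ^ j * of_nat (Suc n choose j) * (x - 1 - of_nat j) ^ n)" for j
  proof -
    define y where "y = x - of_nat (Suc j)"
    have choose_times_y: "of_nat (Suc (Suc n) choose Suc j) * y =
        x * of_nat (Suc n choose Suc j) - (of_nat n + 2 - x) * of_nat (Suc n choose j)"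
      using of_nat_Suc_times_binomial_Suc[of j n, where 'a = 'a] by (simp add: y_def algebra_simps)
    have "(-1) ^ Suc j * of_nat (Suc (Suc n) choose Suc j) * y ^ Suc n =
        (-1) ^ Suc j * (of_nat (Suc (Suc n) choose Suc j) * y) * y ^ n"
      by (simp only: power_Suc mult_ac)
    also have "\<dots> = x * ((-1) ^ Suc j * of_nat (Suc n choose Suc j) * y ^ n)
        + (of_nat n + 2 - x) * ((-1) ^ j * of_nat (Suc n choose j) * y ^ n)"
      unfolding choose_times_y by (simp add: algebra_simps)
    finally show ?thesis by (simp add: y_def algebra_simps del: binomial_Suc_Suc)
  qed
  have "alt_power_sum (Suc n) (Suc i) x = x * x ^ n
      + (\<Sum>j\<le>i. x * ((-1) ^ Suc j * of_nat (Suc n choose Suc j) * (x - of_nat (Suc j)) ^ n)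
        + (of_nat n + 2 - x) * ((-1) ^ j * of_nat (Suc n choose j) * (x - 1 - of_nat j) ^ n))"
    unfolding alt_power_sum_def sum.atMost_Suc_shift[of _ i] term_Suc by simp
  also have "\<dots> = x * alt_power_sum n (Suc i) x + (of_nat n + 2 - x) * alt_power_sum n i (x - 1)"
    unfolding alt_power_sum_def sum.atMost_Suc_shift[of _ i] sum.distrib sum_distrib_left[symmetric]
    by (simp add: distrib_left)
  finally show ?thesis .
qed

lemma euler_e_eq_alt_power_sum: "euler_e k n (int i) = alt_power_sum n i (k + int i + 1)"
proof (induction n arbitrary: i)
  case 0
  show ?case by (simp add: alt_power_sum_0_left)
next
  case (Suc n)
  show ?case
  proof (cases i)
    case 0
    then show ?thesis using Suc.IH[of 0] euler_e_eq_0[of "-1" n k]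
      by (simp add: euler_e_Suc_eq alt_power_sum_0_right)
  next
    case (Suc i')
    define x where "x = k + int i + 1"
    have "euler_e k (Suc n) (int i) = x * euler_e k n (int i) + (int n + 2 - x) * euler_e k n (int i')"
      unfolding euler_e_Suc_eq by (simp add: Suc x_def algebra_simps)
    also have "\<dots> = x * alt_power_sum n i x + (int n + 2 - x) * alt_power_sum n i' (x - 1)"
      using Suc.IH[of i] Suc.IH[of i'] by (simp add: Suc x_def algebra_simps)
    also have "\<dots> = alt_power_sum (Suc n) i x"
      by (simp add: Suc alt_power_sum_Suc_Suc)
    finally show ?thesis unfolding x_def .
  qed
qed

theorem corollary2p3:
  fixes n k i :: nat
  shows "euler_e (int k) n (int i) =
    (\<Sum>j = 0..i. (-1) ^ j * int ((n + 1) choose j) * (int k + int i + 1 - int j) ^ n)"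
  using euler_e_eq_alt_power_sum[of "int k" n i] by (simp add: alt_power_sum_def atLeast0AtMost)

end
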